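(* Let $A\subset\mathbb{R}^d$ be compact, let $n\ge 0$, and let $z_0\in\mathbb{R}^d\setminus A$. Let $\mathcal S(A)$ denote the set of finite signed Borel measures on $A$ whose support contains the support of an optimal prediction measure of degree $n$, and let \[ \nu\in\operatorname{argmin}\Big\{|\nu|(A)\ :\ \nu\in\mathcal S(A),\ \int_A p(x)\,d\nu(x)=p(z_0)\ \text{for all } p\in\mathbb{R}_n(A)\Big\}. \] Then $\mu_n:=\dfrac{|\nu|}{|\nu|(A)}$ is an optimal prediction measure of degree $n$.
   Context: $\mathbb{R}_n(A)$ denotes the space of (restrictions to $A$ of) real polynomials in $d$ variables of total degree at most $n$, of dimension $N$. $|\nu|$ is the total variation measure of $\nu$. For a probability measure $\mu$ on $A$ that is non-degenerate ($\int p^2\,d\mu>0$ for every nonzero $p\in\mathbb{R}_n(A)$), $K_n^\mu(z,z):=\sum_{k=1}^N|q_k(z)|^2$, where $\{q_1,\dots,q_N\}$ is a $\mu$-orthonormal basis of $\mathbb{R}_n(A)$. An optimal prediction measure of degree $n$ is a probability measure on $A$ minimizing $K_n^\mu(z_0,z_0)$ over all probability measures $\mu$ on $A$. *)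

theory Defs
  imports "HOL-Probability.Probability"
begin

text \<open>Points of R^d are elements of real^'d ('d a finite index type, d = CARD('d)).
  A multi-index is a function 'd \<Rightarrow> nat.\<close>

definition monomial :: "('d::finite \<Rightarrow> nat) \<Rightarrow> real^'d \<Rightarrow> real" where
  "monomial \<alpha> x = (\<Prod>i\<in>UNIV. (x $ i) ^ (\<alpha> i))"

definition mdeg :: "('d::finite \<Rightarrow> nat) \<Rightarrow> nat" where
  "mdeg \<alpha> = (\<Sum>i\<in>UNIV. \<alpha> i)"

definition polys :: "nat \<Rightarrow> (real^'d::finite \<Rightarrow> real) set" where
  "polys n = {p. \<exists>c :: ('d \<Rightarrow> nat) \<Rightarrow> real.
      p = (\<lambda>x. \<Sum>\<alpha>\<in>{\<alpha>. mdeg \<alpha> \<le> n}. c \<alpha> * monomial \<alpha> x)}"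

definition prob_measure_on :: "(real^'d::finite) set \<Rightarrow> (real^'d) measure \<Rightarrow> bool" where
  "prob_measure_on A \<mu> \<longleftrightarrow> sets \<mu> = sets borel \<and> prob_space \<mu> \<and> emeasure \<mu> (- A) = 0"

definition non_degenerate :: "nat \<Rightarrow> (real^'d::finite) measure \<Rightarrow> bool" where
  "non_degenerate n \<mu> \<longleftrightarrow>
     (\<forall>p\<in>polys n. p \<noteq> (\<lambda>x. 0) \<longrightarrow> (\<integral>x. (p x)^2 \<partial>\<mu>) > 0)"

definition orthonormal_basis :: "nat \<Rightarrow> (real^'d::finite) measure \<Rightarrow> (real^'d \<Rightarrow> real) list \<Rightarrow> bool" where
  "orthonormal_basis n \<mu> qs \<longleftrightarrow>
     set qs \<subseteq> polys n \<and>
     (\<forall>i<length qs. \<forall>j<length qs.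
        (\<integral>x. (qs ! i) x * (qs ! j) x \<partial>\<mu>) = (if i = j then 1 else 0)) \<and>
     (\<forall>p\<in>polys n. \<exists>c. p = (\<lambda>x. \<Sum>k<length qs. c k * (qs ! k) x))"

text \<open>Christoffel function / reproducing kernel on the diagonal, K_n^mu(z,z).
  (The value does not depend on the chosen orthonormal basis.)\<close>
definition Kn :: "nat \<Rightarrow> (real^'d::finite) measure \<Rightarrow> real^'d \<Rightarrow> real" where
  "Kn n \<mu> z = (SOME s. \<exists>qs. orthonormal_basis n \<mu> qs \<and> s = (\<Sum>k<length qs. ((qs ! k) z)^2))"

text \<open>Optimal prediction measure of degree n at z0 (minimisation among the
  non-degenerate probability measures on A, for which K_n is defined).\<close>
definition optimal_prediction_measure ::
  "(real^'d::finite) set \<Rightarrow> nat \<Rightarrow> real^'d \<Rightarrow> (real^'d) measure \<Rightarrow> bool" where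
  "optimal_prediction_measure A n z0 \<mu> \<longleftrightarrow>
     prob_measure_on A \<mu> \<and> non_degenerate n \<mu> \<and>
     (\<forall>\<mu>'. prob_measure_on A \<mu>' \<and> non_degenerate n \<mu>' \<longrightarrow> Kn n \<mu> z0 \<le> Kn n \<mu>' z0)"

definition msupport :: "(real^'d::finite) measure \<Rightarrow> (real^'d) set" where
  "msupport M = {x. \<forall>U. open U \<and> x \<in> U \<longrightarrow> emeasure M U > 0}"

text \<open>A finite signed Borel measure nu on A is represented by its polar decomposition
  d nu = h d|nu|: T = |nu| is a finite Borel measure concentrated on A and h is a Borel
  function with |h| = 1.  Then |nu|(A) = T(A), int p dnu = int p h dT, supp nu = supp T.\<close>
definition signed_measure_on ::
  "(real^'d::finite) set \<Rightarrow> (real^'d) measure \<Rightarrow> (real^'d \<Rightarrow> real) \<Rightarrow> bool" where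
  "signed_measure_on A T h \<longleftrightarrow>
     sets T = sets borel \<and> finite_measure T \<and> emeasure T (- A) = 0 \<and>
     h \<in> borel_measurable borel \<and> (\<forall>x. \<bar>h x\<bar> = 1)"

definition in_S :: "(real^'d::finite) set \<Rightarrow> nat \<Rightarrow> real^'d \<Rightarrow> (real^'d) measure \<Rightarrow> (real^'d \<Rightarrow> real) \<Rightarrow> bool" where
  "in_S A n z0 T h \<longleftrightarrow> signed_measure_on A T h \<and>
     (\<exists>\<mu>. optimal_prediction_measure A n z0 \<mu> \<and> msupport \<mu> \<subseteq> msupport T)"

definition reproduces :: "nat \<Rightarrow> real^'d::finite \<Rightarrow> (real^'d) measure \<Rightarrow> (real^'d \<Rightarrow> real) \<Rightarrow> bool" where
  "reproduces n z0 T h \<longleftrightarrow> (\<forall>p\<in>polys n. (\<integral>x. p x * h x \<partial>T) = p z0)"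

end

theory Submission
  imports Defs
begin

text \<open>
  Put m = |\<nu>|(A) and \<mu> = |\<nu>| / m, and let k be the reproducing kernel of \<mu> at z0, so that
  K_n^\<mu>(z0,z0) = k(z0) = \<integral> k^2 d\<mu>.  Since \<nu> reproduces k, Cauchy-Schwarz gives
  k(z0)^2 = (\<integral> k d\<nu>)^2 \<le> m \<integral> k^2 d|\<nu>| = m^2 k(z0), hence K_n^\<mu>(z0,z0) \<le> m^2.

  Conversely, let \<mu>' be any non-degenerate probability measure on A with kernel k'.  The signed
  measure k' \<mu>' reproduces polynomials of degree n at z0, and so does every convex combination
  (1 - t) k' \<mu>' + t \<nu>; for all but countably many t in (0,1) its support contains that of \<nu>, so it
  lies in S(A).  Minimality of \<nu> then yields m \<le> \<integral> |k'| d\<mu>' \<le> (\<integral> k'^2 d\<mu>')^(1/2), and the right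
  hand side is K_n^\<mu>'(z0,z0)^(1/2).  Finally, \<mu> is non-degenerate because its support contains the
  support of an optimal prediction measure.
\<close>

section \<open>Polynomials\<close>

lemma finite_mdeg_le: "finite {\<alpha>::'d::finite \<Rightarrow> nat. mdeg \<alpha> \<le> n}"
proof (rule finite_subset)
  show "{\<alpha>::'d \<Rightarrow> nat. mdeg \<alpha> \<le> n} \<subseteq> PiE UNIV (\<lambda>_. {..n})"
  proof
    fix \<alpha> :: "'d \<Rightarrow> nat" assume "\<alpha> \<in> {\<alpha>. mdeg \<alpha> \<le> n}"
    then have "\<alpha> i \<le> n" for i
      using member_le_sum[of i UNIV \<alpha>] by (auto simp: mdeg_def)
    then show "\<alpha> \<in> PiE UNIV (\<lambda>_. {..n})" by auto
  qed
qed (intro finite_PiE, auto)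

lemma continuous_on_polys: "p \<in> polys n \<Longrightarrow> continuous_on UNIV p"
  unfolding polys_def monomial_def by (auto intro!: continuous_intros)

lemma borel_measurable_polys: "p \<in> polys n \<Longrightarrow> p \<in> borel_measurable borel"
  by (rule borel_measurable_continuous_onI[OF continuous_on_polys])

lemma polys_sum:
  assumes "finite I" and "\<forall>i\<in>I. f i \<in> polys n"
  shows "(\<lambda>x. \<Sum>i\<in>I. c i * f i x) \<in> polys n"
  using assms
proof (induction I rule: finite_induct)
  case empty
  show ?case unfolding polys_def by (intro CollectI exI[of _ "\<lambda>_. 0"]) simp
next
  case (insert i I)
  obtain a where a: "f i = (\<lambda>x. \<Sum>\<alpha>\<in>{\<alpha>. mdeg \<alpha> \<le> n}. a \<alpha> * monomial \<alpha> x)"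
    using insert.prems unfolding polys_def by auto
  obtain b where b: "(\<lambda>x. \<Sum>i\<in>I. c i * f i x) = (\<lambda>x. \<Sum>\<alpha>\<in>{\<alpha>. mdeg \<alpha> \<le> n}. b \<alpha> * monomial \<alpha> x)"
    using insert unfolding polys_def by auto
  have eq: "(\<lambda>x. \<Sum>i\<in>insert i I. c i * f i x)
      = (\<lambda>x. \<Sum>\<alpha>\<in>{\<alpha>. mdeg \<alpha> \<le> n}. (c i * a \<alpha> + b \<alpha>) * monomial \<alpha> x)"
    using insert.hyps fun_cong[OF a] fun_cong[OF b]
    by (simp add: sum_distrib_left sum.distrib distrib_right mult.assoc)
  show ?case unfolding polys_def mem_Collect_eq by (rule exI, rule eq)
qed

lemma polys_lincomb:
  assumes "p \<in> polys n" and "q \<in> polys n"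
  shows "(\<lambda>x. a * p x + b * q x) \<in> polys n"
  using polys_sum[of "{True, False}" "\<lambda>i. if i then p else q" n "\<lambda>i. if i then a else b"] assms
  by simp

lemma polys_monomial:
  assumes "mdeg \<alpha> \<le> n"
  shows "monomial \<alpha> \<in> polys n"
proof -
  have "(\<Sum>\<beta>\<in>{\<beta>. mdeg \<beta> \<le> n}. (if \<beta> = \<alpha> then 1 else 0) * monomial \<beta> x)
      = (\<Sum>\<beta>\<in>{\<beta>. mdeg \<beta> \<le> n}. if \<beta> = \<alpha> then monomial \<beta> x else 0)" for x
    by (rule sum.cong) auto
  then have eq: "monomial \<alpha> = (\<lambda>x. \<Sum>\<beta>\<in>{\<beta>. mdeg \<beta> \<le> n}. (if \<beta> = \<alpha> then 1 else 0) * monomial \<beta> x)"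
    using assms by (simp add: sum.delta[OF finite_mdeg_le])
  show ?thesis unfolding polys_def mem_Collect_eq by (rule exI, rule eq)
qed

lemma polys_const: "(\<lambda>x::real^'d::finite. c) \<in> polys n"
proof -
  have "(\<lambda>x::real^'d. c * monomial (\<lambda>_. 0) x) \<in> polys n"
    using polys_sum[of "{\<lambda>_. 0}" monomial n "\<lambda>_. c"] polys_monomial[of "\<lambda>_::'d. 0" n]
    by (simp add: mdeg_def)
  then show ?thesis by (simp add: monomial_def)
qed

section \<open>Finite measures concentrated on \<open>A\<close>\<close>

text \<open>The condition \<open>emeasure M (- A) = 0\<close> says nothing unless \<open>A\<close> is Borel (the emeasure of a
  non-measurable set is \<open>0\<close>), hence the closedness assumptions below.\<close>

definition finite_measure_on :: "(real^'d::finite) set \<Rightarrow> (real^'d) measure \<Rightarrow> bool" where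
  "finite_measure_on A M \<longleftrightarrow> sets M = sets borel \<and> finite_measure M \<and> emeasure M (- A) = 0"

lemma prob_measure_on_imp_finite_measure_on: "prob_measure_on A M \<Longrightarrow> finite_measure_on A M"
  by (auto simp: prob_measure_on_def finite_measure_on_def prob_space_def)

lemma signed_measure_on_imp_finite_measure_on: "signed_measure_on A T h \<Longrightarrow> finite_measure_on A T"
  by (auto simp: signed_measure_on_def finite_measure_on_def)

lemma finite_measure_on_AE:
  assumes "closed A" and "finite_measure_on A M"
  shows "AE x in M. x \<in> A"
  using assms by (intro AE_I'[of "- A"]) (auto simp: finite_measure_on_def null_sets_def)

lemma finite_measure_on_measure_eq_space:
  assumes "closed A" and "finite_measure_on A M"
  shows "measure M A = measure M (space M)"
proof -
  interpret finite_measure M using assms(2) by (simp add: finite_measure_on_def)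
  have "sets M = sets borel" using assms(2) by (simp add: finite_measure_on_def)
  then have "space M = UNIV" and [simp]: "A \<in> sets M"
    using sets_eq_imp_space_eq[of M borel] assms(1) by auto
  show ?thesis
    using finite_measure_eq_AE[of A "space M"] finite_measure_on_AE[OF assms] by auto
qed

lemma integrable_continuous_mult_bounded:
  fixes f g :: "real^'d::finite \<Rightarrow> real"
  assumes "compact A" and "finite_measure_on A M" and "continuous_on UNIV f"
    and "g \<in> borel_measurable borel" and "\<And>x. \<bar>g x\<bar> \<le> 1"
  shows "integrable M (\<lambda>x. f x * g x)"
proof -
  interpret finite_measure M using assms(2) by (simp add: finite_measure_on_def)
  have sM: "sets M = sets borel" using assms(2) by (simp add: finite_measure_on_def)
  obtain B where B: "\<forall>x\<in>A. \<bar>f x\<bar> \<le> B"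
    using compact_imp_bounded[OF compact_continuous_image[OF continuous_on_subset[OF assms(3)] assms(1)]]
    by (auto simp: bounded_iff)
  show ?thesis
  proof (rule integrable_const_bound[where B = B])
    show "AE x in M. norm (f x * g x) \<le> B"
      using finite_measure_on_AE[OF compact_imp_closed[OF assms(1)] assms(2)]
    proof eventually_elim
      case (elim x)
      then show ?case
        using B mult_mono[of "\<bar>f x\<bar>" B "\<bar>g x\<bar>" 1] assms(5)[of x] by (force simp: abs_mult)
    qed
    show "(\<lambda>x. f x * g x) \<in> borel_measurable M"
      using borel_measurable_continuous_onI[OF assms(3)] assms(4)
      by (simp add: measurable_cong_sets[OF sM refl])
  qed
qed

lemma integrable_continuous:
  fixes f :: "real^'d::finite \<Rightarrow> real"
  assumes "compact A" and "finite_measure_on A M" and "continuous_on UNIV f"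
  shows "integrable M f"
  using integrable_continuous_mult_bounded[OF assms, of "\<lambda>_. 1"] by simp

lemma (in finite_measure) square_integral_le:
  fixes f :: "'a \<Rightarrow> real"
  assumes "integrable M f" and "integrable M (\<lambda>x. (f x)\<^sup>2)"
  shows "(\<integral>x. f x \<partial>M)\<^sup>2 \<le> measure M (space M) * (\<integral>x. (f x)\<^sup>2 \<partial>M)"
proof -
  define m I J where "m = measure M (space M)" and "I = (\<integral>x. f x \<partial>M)" and "J = (\<integral>x. (f x)\<^sup>2 \<partial>M)"
  have "0 \<le> (\<integral>x. (m * f x - I)\<^sup>2 \<partial>M)" by simp
  also have "\<dots> = (\<integral>x. m\<^sup>2 * (f x)\<^sup>2 - 2 * m * I * f x + I\<^sup>2 \<partial>M)"
    by (simp add: power2_eq_square algebra_simps)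
  also have "\<dots> = m\<^sup>2 * J - 2 * m * I * I + m * I\<^sup>2"
    using assms by (simp add: m_def I_def J_def)
  also have "\<dots> = m * (m * J - I\<^sup>2)"
    by (simp add: power2_eq_square algebra_simps)
  finally have "0 \<le> m * (m * J - I\<^sup>2)" .
  moreover have "I = 0" if "m = 0"
  proof -
    have "AE x in M. f x = 0"
      using that by (intro AE_I'[of "space M"]) (auto simp: null_sets_def m_def emeasure_eq_measure)
    then show ?thesis unfolding I_def by (rule integral_eq_zero_AE)
  qed
  ultimately show ?thesis
    using measure_nonneg[of M "space M"]
    by (cases "m = 0") (auto simp: m_def I_def J_def zero_le_mult_iff)
qed

section \<open>Orthonormal bases and the reproducing kernel\<close>

definition in_span :: "('a \<Rightarrow> real) list \<Rightarrow> ('a \<Rightarrow> real) \<Rightarrow> bool" where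
  "in_span qs p \<longleftrightarrow> (\<exists>c. p = (\<lambda>x. \<Sum>k<length qs. c k * (qs ! k) x))"

lemma in_span_snoc:
  assumes "in_span qs s"
  shows "in_span (qs @ [q]) (\<lambda>x. s x + e * q x)"
proof -
  obtain c where c: "s = (\<lambda>x. \<Sum>k<length qs. c k * (qs ! k) x)"
    using assms by (auto simp: in_span_def)
  define c' where "c' k = (if k < length qs then c k else e)" for k
  have "s x + e * q x = (\<Sum>k<length (qs @ [q]). c' k * ((qs @ [q]) ! k) x)" for x
    by (simp add: c c'_def nth_append)
  then show ?thesis unfolding in_span_def by blast
qed

lemma in_span_append: "in_span qs p \<Longrightarrow> in_span (qs @ [q]) p"
  using in_span_snoc[of qs p q 0] by simp

lemma in_span_sum:
  assumes "finite S" and "\<forall>\<alpha>\<in>S. in_span qs (f \<alpha>)"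
  shows "in_span qs (\<lambda>x. \<Sum>\<alpha>\<in>S. c \<alpha> * f \<alpha> x)"
proof -
  obtain d where d: "\<forall>\<alpha>\<in>S. f \<alpha> = (\<lambda>x. \<Sum>k<length qs. d \<alpha> k * (qs ! k) x)"
    using assms(2) unfolding in_span_def by metis
  have "(\<Sum>\<alpha>\<in>S. c \<alpha> * f \<alpha> x) = (\<Sum>k<length qs. (\<Sum>\<alpha>\<in>S. c \<alpha> * d \<alpha> k) * (qs ! k) x)" for x
  proof -
    have "(\<Sum>\<alpha>\<in>S. c \<alpha> * f \<alpha> x) = (\<Sum>\<alpha>\<in>S. \<Sum>k<length qs. c \<alpha> * d \<alpha> k * (qs ! k) x)"
      using d by (simp add: sum_distrib_left mult.assoc)
    also have "\<dots> = (\<Sum>k<length qs. (\<Sum>\<alpha>\<in>S. c \<alpha> * d \<alpha> k) * (qs ! k) x)"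
      by (subst sum.swap) (simp add: sum_distrib_right)
    finally show ?thesis .
  qed
  then have eq: "(\<lambda>x. \<Sum>\<alpha>\<in>S. c \<alpha> * f \<alpha> x) = (\<lambda>x. \<Sum>k<length qs. (\<Sum>\<alpha>\<in>S. c \<alpha> * d \<alpha> k) * (qs ! k) x)"
    by (rule ext)
  show ?thesis unfolding in_span_def by (rule exI, rule eq)
qed

locale nondegenerate_measure =
  fixes A :: "(real^'d::finite) set" and \<mu> :: "(real^'d) measure" and n :: nat
  assumes compact_A: "compact A"
    and finite_on_A: "finite_measure_on A \<mu>"
    and nondegenerate: "non_degenerate n \<mu>"
begin

definition inner_L2 :: "(real^'d \<Rightarrow> real) \<Rightarrow> (real^'d \<Rightarrow> real) \<Rightarrow> real" where
  "inner_L2 f g = (\<integral>x. f x * g x \<partial>\<mu>)"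

definition orthonormal :: "(real^'d \<Rightarrow> real) list \<Rightarrow> bool" where
  "orthonormal qs \<longleftrightarrow> set qs \<subseteq> polys n \<and>
     (\<forall>i<length qs. \<forall>j<length qs. inner_L2 (qs ! i) (qs ! j) = (if i = j then 1 else 0))"

lemma integrable_polys_mult:
  "p \<in> polys n \<Longrightarrow> q \<in> polys n \<Longrightarrow> integrable \<mu> (\<lambda>x. p x * q x)"
  by (intro integrable_continuous[OF compact_A finite_on_A] continuous_intros continuous_on_polys)

lemma inner_L2_commute: "inner_L2 f g = inner_L2 g f"
  unfolding inner_L2_def by (simp add: mult.commute)

lemma inner_L2_scale_right: "inner_L2 f (\<lambda>x. c * g x) = c * inner_L2 f g"
  unfolding inner_L2_def by (simp add: mult.left_commute)

lemma inner_L2_sum_right: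
  assumes "set qs \<subseteq> polys n" and "q \<in> polys n"
  shows "inner_L2 q (\<lambda>x. \<Sum>k<length qs. c k * (qs ! k) x) = (\<Sum>k<length qs. c k * inner_L2 q (qs ! k))"
proof -
  have "integrable \<mu> (\<lambda>x. q x * (qs ! k) x)" if "k < length qs" for k
    using assms that by (intro integrable_polys_mult) auto
  then show ?thesis
    unfolding inner_L2_def by (simp add: sum_distrib_left mult.left_commute)
qed

lemma inner_L2_orthonormal_coeff:
  assumes "orthonormal qs" and "j < length qs"
  shows "inner_L2 (qs ! j) (\<lambda>x. \<Sum>k<length qs. c k * (qs ! k) x) = c j"
proof -
  have "inner_L2 (qs ! j) (\<lambda>x. \<Sum>k<length qs. c k * (qs ! k) x)
      = (\<Sum>k<length qs. c k * inner_L2 (qs ! j) (qs ! k))"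
    using assms by (intro inner_L2_sum_right) (auto simp: orthonormal_def)
  also have "\<dots> = (\<Sum>k<length qs. if k = j then c k else 0)"
    using assms by (intro sum.cong) (auto simp: orthonormal_def)
  also have "\<dots> = c j" using assms(2) by simp
  finally show ?thesis .
qed

lemma orthonormal_snoc:
  assumes "orthonormal qs" and "q \<in> polys n" and "\<forall>j<length qs. inner_L2 (qs ! j) q = 0"
    and "inner_L2 q q = 1"
  shows "orthonormal (qs @ [q])"
proof -
  have "inner_L2 ((qs @ [q]) ! i) ((qs @ [q]) ! j) = (if i = j then 1 else 0)"
    if "i < Suc (length qs)" and "j < Suc (length qs)" for i j
    using that assms inner_L2_commute[of "qs ! j" q]
    by (cases "i < length qs"; cases "j < length qs") (auto simp: orthonormal_def nth_append)
  moreover have "set (qs @ [q]) \<subseteq> polys n" using assms(1,2) by (simp add: orthonormal_def)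
  ultimately show ?thesis unfolding orthonormal_def by simp
qed

lemma orthonormal_snoc_normalize:
  assumes "orthonormal qs" and "r \<in> polys n" and "r \<noteq> (\<lambda>x. 0)"
    and "\<forall>j<length qs. inner_L2 (qs ! j) r = 0"
  shows "0 < inner_L2 r r" and "orthonormal (qs @ [\<lambda>x. r x / sqrt (inner_L2 r r)])"
proof -
  show v: "0 < inner_L2 r r"
    using nondegenerate assms(2,3) by (simp add: non_degenerate_def inner_L2_def power2_eq_square)
  define q where "q = (\<lambda>x. r x / sqrt (inner_L2 r r))"
  have "q \<in> polys n"
    unfolding q_def using polys_lincomb[OF assms(2) assms(2), of "1 / sqrt (inner_L2 r r)" 0] by simp
  moreover have "inner_L2 q q = 1"
    using v unfolding q_def inner_L2_def by (simp add: field_simps)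
  moreover have "inner_L2 (qs ! j) q = 0" if "j < length qs" for j
    using inner_L2_scale_right[of "qs ! j" "1 / sqrt (inner_L2 r r)" r] assms(4) that
    by (simp add: q_def)
  ultimately show "orthonormal (qs @ [\<lambda>x. r x / sqrt (inner_L2 r r)])"
    using orthonormal_snoc[OF assms(1)] unfolding q_def by blast
qed

lemma orthonormal_extend:
  assumes "orthonormal qs" and "p \<in> polys n"
  obtains qs' where "orthonormal qs'" and "in_span qs' p" and "\<And>f. in_span qs f \<Longrightarrow> in_span qs' f"
proof -
  define s where "s x = (\<Sum>k<length qs. inner_L2 (qs ! k) p * (qs ! k) x)" for x
  define r where "r x = p x - s x" for x
  have qs_polys: "\<forall>k<length qs. qs ! k \<in> polys n" using assms(1) by (auto simp: orthonormal_def)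
  have s_polys: "s \<in> polys n"
    unfolding s_def using polys_sum[of "{..<length qs}" "(!) qs" n] qs_polys by simp
  have r_polys: "r \<in> polys n"
    unfolding r_def using polys_lincomb[OF assms(2) s_polys, of 1 "-1"] by simp
  have s_span: "in_span qs s"
    unfolding in_span_def by (rule exI[of _ "\<lambda>k. inner_L2 (qs ! k) p"]) (simp add: s_def fun_eq_iff)
  have r_orth: "\<forall>j<length qs. inner_L2 (qs ! j) r = 0"
  proof (intro allI impI)
    fix j assume "j < length qs"
    have "inner_L2 (qs ! j) r = inner_L2 (qs ! j) p - inner_L2 (qs ! j) s"
      unfolding inner_L2_def r_def using \<open>j < length qs\<close> qs_polys assms(2) s_polys
      by (simp add: right_diff_distrib integrable_polys_mult)
    then show "inner_L2 (qs ! j) r = 0"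
      unfolding s_def using inner_L2_orthonormal_coeff[OF assms(1) \<open>j < length qs\<close>] by simp
  qed
  show ?thesis
  proof (cases "r = (\<lambda>x. 0)")
    case True
    then have "p = s" by (auto simp: r_def fun_eq_iff)
    then show ?thesis using that assms(1) s_span by blast
  next
    case False
    define q where "q = (\<lambda>x. r x / sqrt (inner_L2 r r))"
    note normalize = orthonormal_snoc_normalize[OF assms(1) r_polys False r_orth, folded q_def]
    have "p = (\<lambda>x. s x + sqrt (inner_L2 r r) * q x)"
      using normalize(1) by (simp add: q_def r_def fun_eq_iff)
    then have "in_span (qs @ [q]) p" using in_span_snoc[OF s_span] by simp
    then show ?thesis using that normalize(2) in_span_append by blast
  qed
qed

lemma orthonormal_spanning:
  assumes "finite I" and "\<forall>i\<in>I. f i \<in> polys n"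
  shows "\<exists>qs. orthonormal qs \<and> (\<forall>i\<in>I. in_span qs (f i))"
  using assms
proof (induction I rule: finite_induct)
  case empty
  show ?case by (auto simp: orthonormal_def intro: exI[of _ "[]"])
next
  case (insert i I)
  then obtain qs where "orthonormal qs" and "\<forall>j\<in>I. in_span qs (f j)" by auto
  with orthonormal_extend[of qs "f i"] insert.prems show ?case by (metis insert_iff)
qed

lemma ex_orthonormal_basis: "\<exists>qs. orthonormal_basis n \<mu> qs"
proof -
  obtain qs where qs: "orthonormal qs" and span: "\<forall>\<alpha>\<in>{\<alpha>. mdeg \<alpha> \<le> n}. in_span qs (monomial \<alpha>)"
    using orthonormal_spanning[OF finite_mdeg_le, where f = monomial] polys_monomial by blast
  have "in_span qs p" if "p \<in> polys n" for p
    using that in_span_sum[OF finite_mdeg_le span] by (auto simp: polys_def)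
  then show ?thesis
    using qs unfolding orthonormal_basis_def orthonormal_def inner_L2_def in_span_def by blast
qed

lemma Kn_reproducing_kernel:
  obtains k where "k \<in> polys n" and "\<forall>p\<in>polys n. (\<integral>x. p x * k x \<partial>\<mu>) = p z"
    and "Kn n \<mu> z = k z"
proof -
  have "\<exists>s qs. orthonormal_basis n \<mu> qs \<and> s = (\<Sum>j<length qs. ((qs ! j) z)\<^sup>2)"
    using ex_orthonormal_basis by blast
  from someI_ex[OF this] obtain qs where qs: "orthonormal_basis n \<mu> qs"
    and K: "Kn n \<mu> z = (\<Sum>j<length qs. ((qs ! j) z)\<^sup>2)"
    unfolding Kn_def by blast
  have on: "orthonormal qs"
    using qs by (simp add: orthonormal_basis_def orthonormal_def inner_L2_def)
  define k where "k = (\<lambda>x. \<Sum>j<length qs. (qs ! j) z * (qs ! j) x)"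
  have "\<forall>j\<in>{..<length qs}. qs ! j \<in> polys n"
    using qs by (auto simp: orthonormal_basis_def)
  then have "k \<in> polys n"
    unfolding k_def using polys_sum[of "{..<length qs}" "(!) qs" n "\<lambda>j. (qs ! j) z"] by simp
  moreover have "(\<integral>x. p x * k x \<partial>\<mu>) = p z" if "p \<in> polys n" for p
  proof -
    have "\<exists>c. p = (\<lambda>x. \<Sum>j<length qs. c j * (qs ! j) x)"
      using qs that by (simp add: orthonormal_basis_def)
    then obtain c where c: "p = (\<lambda>x. \<Sum>j<length qs. c j * (qs ! j) x)" ..
    have coeff: "inner_L2 p (qs ! j) = c j" if "j < length qs" for j
    proof -
      have "inner_L2 p (qs ! j) = inner_L2 (qs ! j) p" by (rule inner_L2_commute)
      also have "\<dots> = c j" unfolding c by (rule inner_L2_orthonormal_coeff[OF on that])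
      finally show ?thesis .
    qed
    have "(\<integral>x. p x * k x \<partial>\<mu>) = inner_L2 p k" by (simp add: inner_L2_def)
    also have "\<dots> = (\<Sum>j<length qs. (qs ! j) z * inner_L2 p (qs ! j))"
      unfolding k_def using qs that by (intro inner_L2_sum_right) (simp_all add: orthonormal_basis_def)
    also have "\<dots> = (\<Sum>j<length qs. c j * (qs ! j) z)"
      using coeff by (simp add: mult.commute)
    also have "\<dots> = p z" by (simp add: c)
    finally show ?thesis .
  qed
  moreover have "Kn n \<mu> z = k z" by (simp add: K k_def power2_eq_square)
  ultimately show ?thesis using that by blast
qed

end

section \<open>Supports\<close>

lemma msupport_iff_basis:
  fixes M :: "(real^'d::finite) measure"
  assumes "topological_basis B" and "sets M = sets borel"
  shows "x \<in> msupport M \<longleftrightarrow> (\<forall>U\<in>B. x \<in> U \<longrightarrow> 0 < emeasure M U)"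
proof
  assume "x \<in> msupport M"
  then show "\<forall>U\<in>B. x \<in> U \<longrightarrow> 0 < emeasure M U"
    using topological_basis_open[OF assms(1)] by (auto simp: msupport_def)
next
  assume basis_pos: "\<forall>U\<in>B. x \<in> U \<longrightarrow> 0 < emeasure M U"
  show "x \<in> msupport M" unfolding msupport_def
  proof (intro CollectI allI impI)
    fix V assume V: "open V \<and> x \<in> V"
    then obtain U where "U \<in> B" and "x \<in> U" and "U \<subseteq> V"
      using topological_basisE[OF assms(1)] by blast
    then have "0 < emeasure M U" using basis_pos by blast
    also have "\<dots> \<le> emeasure M V"
      using \<open>U \<subseteq> V\<close> V assms(2) by (intro emeasure_mono) auto
    finally show "0 < emeasure M V" .
  qed
qed

lemma AE_in_msupport:
  fixes M :: "(real^'d::finite) measure"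
  assumes "sets M = sets borel"
  shows "AE x in M. x \<in> msupport M"
proof -
  obtain B :: "(real^'d) set set" where "countable B" and B: "topological_basis B"
    using ex_countable_basis by blast
  have "(\<Union>U\<in>{U\<in>B. emeasure M U = 0}. U) \<in> null_sets M"
    using \<open>countable B\<close> topological_basis_open[OF B] assms
    by (intro null_sets_UN') (auto simp: null_sets_def)
  moreover have "{x \<in> space M. x \<notin> msupport M} \<subseteq> (\<Union>U\<in>{U\<in>B. emeasure M U = 0}. U)"
    using msupport_iff_basis[OF B assms] by (auto simp: not_gr_zero)
  ultimately show ?thesis by (rule AE_I')
qed

lemma continuous_AE_zero_on_msupport:
  fixes f :: "real^'d::finite \<Rightarrow> real"
  assumes "sets M = sets borel" and "continuous_on UNIV f"
    and "AE x in M. f x = 0" and "x \<in> msupport M"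
  shows "f x = 0"
proof (rule ccontr)
  assume "f x \<noteq> 0"
  define U where "U = f -` (- {0})"
  have "open U" unfolding U_def by (rule open_vimage[OF _ assms(2)]) auto
  then have "0 < emeasure M U"
    using assms(4) \<open>f x \<noteq> 0\<close> by (auto simp: msupport_def U_def)
  moreover have "U \<in> null_sets M"
  proof (subst AE_iff_null_sets)
    show "U \<in> sets M" using \<open>open U\<close> assms(1) by simp
    show "AE x in M. x \<notin> U" using assms(3) by eventually_elim (simp add: U_def)
  qed
  ultimately show False by (simp add: null_sets_def)
qed

lemma non_degenerate_msupport_mono:
  fixes \<mu> \<nu> :: "(real^'d::finite) measure"
  assumes "non_degenerate n \<mu>" and "sets \<mu> = sets borel"
    and "compact A" and "finite_measure_on A \<nu>" and "msupport \<mu> \<subseteq> msupport \<nu>"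
  shows "non_degenerate n \<nu>"
  unfolding non_degenerate_def
proof (intro ballI impI)
  fix p :: "real^'d \<Rightarrow> real" assume p: "p \<in> polys n" and "p \<noteq> (\<lambda>x. 0)"
  have cont: "continuous_on UNIV (\<lambda>x. (p x)\<^sup>2)"
    using continuous_on_polys[OF p] by (intro continuous_intros)
  have sets_\<nu>: "sets \<nu> = sets borel" using assms(4) by (simp add: finite_measure_on_def)
  have "(\<integral>x. (p x)\<^sup>2 \<partial>\<nu>) \<noteq> 0"
  proof
    assume "(\<integral>x. (p x)\<^sup>2 \<partial>\<nu>) = 0"
    then have AE_\<nu>: "AE x in \<nu>. (p x)\<^sup>2 = 0"
      using integrable_continuous[OF assms(3,4) cont] by (simp add: integral_nonneg_eq_0_iff_AE)
    have "(p x)\<^sup>2 = 0" if "x \<in> msupport \<mu>" for x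
      using continuous_AE_zero_on_msupport[OF sets_\<nu> cont AE_\<nu>] assms(5) that by blast
    then have "AE x in \<mu>. (p x)\<^sup>2 = 0"
      using AE_in_msupport[OF assms(2)] by (auto elim: AE_mp)
    then have "(\<integral>x. (p x)\<^sup>2 \<partial>\<mu>) = 0" by (rule integral_eq_zero_AE)
    moreover have "0 < (\<integral>x. (p x)\<^sup>2 \<partial>\<mu>)"
      using assms(1) p \<open>p \<noteq> (\<lambda>x. 0)\<close> unfolding non_degenerate_def by blast
    ultimately show False by simp
  qed
  then show "(\<integral>x. (p x)\<^sup>2 \<partial>\<nu>) > 0" by (simp add: order_less_le)
qed

lemma msupport_scale_measure: "0 < c \<Longrightarrow> msupport (scale_measure c M) = msupport M"
  by (simp add: msupport_def ennreal_zero_less_mult_iff)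

section \<open>The normalized measure and the upper bound\<close>

lemma scale_measure_eq_density:
  "scale_measure (ennreal c) M = density M (\<lambda>_. ennreal c)"
  by (rule measure_eqI) (simp_all add: emeasure_density nn_integral_cmult_indicator)

lemma integral_scale_measure:
  fixes f :: "'a \<Rightarrow> real"
  assumes "0 \<le> c" and "f \<in> borel_measurable M"
  shows "(\<integral>x. f x \<partial>scale_measure (ennreal c) M) = c * (\<integral>x. f x \<partial>M)"
  using assms by (simp add: scale_measure_eq_density integral_density)

lemma reproduces_measure_pos:
  assumes "compact A" and "signed_measure_on A T h" and "reproduces n z0 T h"
  shows "0 < measure T A"
proof (rule ccontr)
  assume "\<not> 0 < measure T A"
  moreover have "measure T A = measure T (space T)"
    using assms(1,2) by (intro finite_measure_on_measure_eq_space compact_imp_closed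
        signed_measure_on_imp_finite_measure_on)
  ultimately have "measure T (space T) = 0"
    using measure_nonneg[of T "space T"] by simp
  then have "AE x in T. h x = 0"
    using assms(2) by (intro AE_I'[of "space T"])
      (auto simp: null_sets_def signed_measure_on_def finite_measure.emeasure_eq_measure)
  then have "(\<integral>x. 1 * h x \<partial>T) = 0" by (simp add: integral_eq_zero_AE)
  moreover have "(\<integral>x. 1 * h x \<partial>T) = 1"
    using bspec[OF assms(3)[unfolded reproduces_def] polys_const[of 1 n]] by simp
  ultimately show False by simp
qed

lemma prob_measure_on_normalize:
  assumes "closed A" and "finite_measure_on A T" and "0 < measure T A"
  shows "prob_measure_on A (scale_measure (ennreal (1 / measure T A)) T)"
  unfolding prob_measure_on_def
proof (intro conjI)
  show "sets (scale_measure (ennreal (1 / measure T A)) T) = sets borel"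
    using assms(2) by (simp add: finite_measure_on_def)
  show "emeasure (scale_measure (ennreal (1 / measure T A)) T) (- A) = 0"
    using assms(2) by (simp add: finite_measure_on_def)
  show "prob_space (scale_measure (ennreal (1 / measure T A)) T)"
  proof (rule prob_spaceI)
    interpret finite_measure T using assms(2) by (simp add: finite_measure_on_def)
    show "emeasure (scale_measure (ennreal (1 / measure T A)) T) (space (scale_measure (ennreal (1 / measure T A)) T)) = 1"
      using finite_measure_on_measure_eq_space[OF assms(1,2)] assms(3)
      by (simp add: space_scale_measure emeasure_eq_measure ennreal_mult[symmetric])
  qed
qed

lemma reproduces_square_le:
  assumes A: "compact A" and T_h: "signed_measure_on A T h" and rep: "reproduces n z0 T h"
    and p: "p \<in> polys n"
  shows "(p z0)\<^sup>2 \<le> measure T A * (\<integral>x. (p x)\<^sup>2 \<partial>T)"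
proof -
  have T: "finite_measure_on A T" by (rule signed_measure_on_imp_finite_measure_on[OF T_h])
  interpret T: finite_measure T using T by (simp add: finite_measure_on_def)
  have h: "h \<in> borel_measurable borel" and h1: "\<And>x. \<bar>h x\<bar> = 1"
    using T_h by (auto simp: signed_measure_on_def)
  have "(h x)\<^sup>2 = 1" for x by (metis h1 power2_abs power_one)
  then have sq: "(p x * h x)\<^sup>2 = (p x)\<^sup>2" for x by (simp add: power_mult_distrib)
  have cont: "continuous_on UNIV p" by (rule continuous_on_polys[OF p])
  have "p z0 = (\<integral>x. p x * h x \<partial>T)" using rep p by (simp add: reproduces_def)
  moreover have "(\<integral>x. p x * h x \<partial>T)\<^sup>2 \<le> measure T (space T) * (\<integral>x. (p x * h x)\<^sup>2 \<partial>T)"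
    using integrable_continuous_mult_bounded[OF A T cont h]
      integrable_continuous[OF A T continuous_on_power[OF cont]]
    by (intro T.square_integral_le) (simp_all add: h1 sq)
  ultimately show ?thesis
    using finite_measure_on_measure_eq_space[OF compact_imp_closed[OF A] T] by (simp add: sq)
qed

lemma Kn_normalized_le:
  fixes A :: "(real^'d::finite) set" and T :: "(real^'d) measure"
  defines "\<mu> \<equiv> scale_measure (ennreal (1 / measure T A)) T"
  assumes A: "compact A" and T_h: "signed_measure_on A T h" and rep: "reproduces n z0 T h"
    and nondeg: "non_degenerate n \<mu>"
  shows "Kn n \<mu> z0 \<le> (measure T A)\<^sup>2"
proof -
  define m where "m = measure T A"
  have T: "finite_measure_on A T" by (rule signed_measure_on_imp_finite_measure_on[OF T_h])
  have "0 < m" unfolding m_def by (rule reproduces_measure_pos[OF A T_h rep])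
  have "prob_measure_on A \<mu>"
    unfolding \<mu>_def using prob_measure_on_normalize[OF compact_imp_closed[OF A] T \<open>0 < m\<close>[unfolded m_def]] .
  then interpret nondegenerate_measure A \<mu> n
    using A nondeg by unfold_locales (simp_all add: prob_measure_on_imp_finite_measure_on)
  obtain k where k: "k \<in> polys n" and k_rep: "\<forall>p\<in>polys n. (\<integral>x. p x * k x \<partial>\<mu>) = p z0"
    and K: "Kn n \<mu> z0 = k z0"
    using Kn_reproducing_kernel by blast
  have sets_T: "sets T = sets borel" using T by (simp add: finite_measure_on_def)
  have "(\<lambda>x. (k x)\<^sup>2) \<in> borel_measurable T"
    using borel_measurable_polys[OF k] unfolding measurable_cong_sets[OF sets_T refl] by measurable
  have K_int: "Kn n \<mu> z0 = (\<integral>x. (k x)\<^sup>2 \<partial>\<mu>)" using K bspec[OF k_rep k] by (simp add: power2_eq_square)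
  also have "\<dots> = (1 / m) * (\<integral>x. (k x)\<^sup>2 \<partial>T)"
    unfolding \<mu>_def m_def using \<open>0 < m\<close> \<open>(\<lambda>x. (k x)\<^sup>2) \<in> borel_measurable T\<close>
    by (intro integral_scale_measure) (simp_all add: m_def)
  finally have "(\<integral>x. (k x)\<^sup>2 \<partial>T) = m * Kn n \<mu> z0" using \<open>0 < m\<close> by simp
  then have "Kn n \<mu> z0 * Kn n \<mu> z0 \<le> m\<^sup>2 * Kn n \<mu> z0"
    using reproduces_square_le[OF A T_h rep k] unfolding K m_def[symmetric]
    by (simp add: power2_eq_square mult.assoc)
  moreover have "0 \<le> Kn n \<mu> z0"
    unfolding K_int by (rule integral_nonneg_AE) simp
  ultimately show ?thesis
    unfolding m_def[symmetric] by (cases "Kn n \<mu> z0 = 0") (auto intro: mult_right_le_imp_le)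
qed

section \<open>Competitors and the lower bound\<close>

lemma exists_sum_measure:
  fixes M N :: "'a measure"
  assumes "sets N = sets M"
  obtains L where "sets L = sets M" and "\<And>S. S \<in> sets M \<Longrightarrow> emeasure L S = emeasure M S + emeasure N S"
proof
  define L where "L = measure_of (space M) (sets M) (\<lambda>S. emeasure M S + emeasure N S)"
  show "sets L = sets M" unfolding L_def by simp
  have "countably_additive (sets M) (\<lambda>S. emeasure M S + emeasure N S)"
    unfolding countably_additive_def
  proof (intro allI impI)
    fix F :: "nat \<Rightarrow> 'a set"
    assume F: "range F \<subseteq> sets M" "disjoint_family F"
    have "(\<Sum>i. emeasure M (F i) + emeasure N (F i)) = (\<Sum>i. emeasure M (F i)) + (\<Sum>i. emeasure N (F i))"
      by (rule suminf_add[symmetric]) auto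
    then show "(\<Sum>i. emeasure M (F i) + emeasure N (F i)) = emeasure M (\<Union>i. F i) + emeasure N (\<Union>i. F i)"
      using F assms by (simp add: suminf_emeasure)
  qed
  then show "emeasure L S = emeasure M S + emeasure N S" if "S \<in> sets M" for S
    unfolding L_def using that
    by (intro emeasure_measure_of_sigma) (auto simp: positive_def sets.sigma_algebra_axioms)
qed

lemma (in finite_measure) real_density_of_absolutely_continuous:
  assumes "finite_measure N" and "absolutely_continuous M N" and "sets N = sets M"
  obtains D where "D \<in> borel_measurable M" and "\<And>x. 0 \<le> D x"
    and "density M (\<lambda>x. ennreal (D x)) = N"
proof -
  obtain D where D: "D \<in> borel_measurable M" and "AE x in M. RN_deriv M N x = ennreal (D x)"
    and "\<And>x. 0 \<le> D x"
    using real_RN_deriv[OF assms] by metis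
  moreover have "density M (\<lambda>x. ennreal (D x)) = density M (RN_deriv M N)"
    using D \<open>AE x in M. RN_deriv M N x = ennreal (D x)\<close> by (intro density_cong) auto
  ultimately show ?thesis
    using that density_RN_deriv[OF assms(2,3)] by simp
qed

lemma integral_density_real:
  fixes L :: "'a measure" and D f :: "'a \<Rightarrow> real"
  assumes "D \<in> borel_measurable L" and "\<And>x. 0 \<le> D x" and "f \<in> borel_measurable L"
  shows "(\<integral>x. f x \<partial>density L (\<lambda>x. ennreal (D x))) = (\<integral>x. D x * f x \<partial>L)"
    and "integrable (density L (\<lambda>x. ennreal (D x))) f \<longleftrightarrow> integrable L (\<lambda>x. D x * f x)"
  using assms by (simp_all add: integral_density integrable_density)

lemma finite_measures_common_density:
  fixes M N :: "(real^'d::finite) measure"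
  assumes A: "closed A" and M: "finite_measure_on A M" and N: "finite_measure_on A N"
  obtains L D0 D1 where "finite_measure_on A L"
    and "D0 \<in> borel_measurable borel" and "\<And>x. 0 \<le> D0 x" and "M = density L (\<lambda>x. ennreal (D0 x))"
    and "D1 \<in> borel_measurable borel" and "\<And>x. 0 \<le> D1 x" and "N = density L (\<lambda>x. ennreal (D1 x))"
proof -
  have sets_M: "sets M = sets borel" and sets_N: "sets N = sets borel"
    using M N by (simp_all add: finite_measure_on_def)
  interpret M: finite_measure M using M by (simp add: finite_measure_on_def)
  interpret N: finite_measure N using N by (simp add: finite_measure_on_def)
  obtain L where sets_L: "sets L = sets M"
    and L: "\<And>S. S \<in> sets M \<Longrightarrow> emeasure L S = emeasure M S + emeasure N S"
    using exists_sum_measure[of N M] sets_M sets_N by metis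
  have space_L: "space L = space M" by (rule sets_eq_imp_space_eq[OF sets_L])
  have "finite_measure L"
    using L[of "space M"] space_L M.emeasure_finite N.emeasure_finite
    by (intro finite_measureI) (simp add: ennreal_add_eq_top)
  moreover have "emeasure L (- A) = 0"
    using A M N L[of "- A"] sets_M by (simp add: finite_measure_on_def)
  ultimately have L_on: "finite_measure_on A L"
    using sets_L sets_M by (simp add: finite_measure_on_def)
  interpret L: finite_measure L by fact
  have ac_M: "absolutely_continuous L M" and ac_N: "absolutely_continuous L N"
    unfolding absolutely_continuous_def using L sets_L sets_M sets_N by (auto simp: null_sets_def)
  have meas_L: "measurable L borel = borel_measurable borel"
    using sets_L sets_M by (intro measurable_cong_sets) simp_all
  obtain D0 where "D0 \<in> borel_measurable L" "\<And>x. 0 \<le> D0 x" "density L (\<lambda>x. ennreal (D0 x)) = M"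
    by (rule L.real_density_of_absolutely_continuous[OF M.finite_measure_axioms ac_M]) (auto simp: sets_L)
  moreover obtain D1 where "D1 \<in> borel_measurable L" "\<And>x. 0 \<le> D1 x" "density L (\<lambda>x. ennreal (D1 x)) = N"
    by (rule L.real_density_of_absolutely_continuous[OF N.finite_measure_axioms ac_N])
      (auto simp: sets_L sets_M sets_N)
  ultimately show ?thesis using that[OF L_on] by (simp add: meas_L)
qed

lemma signed_measure_on_density:
  fixes L :: "(real^'d::finite) measure" and g :: "real^'d \<Rightarrow> real"
  defines "T \<equiv> density L (\<lambda>x. ennreal \<bar>g x\<bar>)" and "h \<equiv> \<lambda>x. if 0 \<le> g x then 1 else - 1 :: real"
  assumes A: "closed A" and L: "finite_measure_on A L"
    and g: "g \<in> borel_measurable borel" and "integrable L g"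
  shows "signed_measure_on A T h"
    and "\<And>f. f \<in> borel_measurable borel \<Longrightarrow> (\<integral>x. f x * h x \<partial>T) = (\<integral>x. f x * g x \<partial>L)"
    and "measure T A = (\<integral>x. \<bar>g x\<bar> \<partial>L)"
proof -
  note [measurable] = g
  have sets_L: "sets L = sets borel" using L by (simp add: finite_measure_on_def)
  interpret L: finite_measure L using L by (simp add: finite_measure_on_def)
  have g_L[measurable]: "g \<in> borel_measurable L" using g by (simp add: measurable_cong_sets[OF sets_L refl])
  have sets_T: "sets T = sets borel" by (simp add: T_def sets_L)
  have integral_T: "(\<integral>x. f x \<partial>T) = (\<integral>x. \<bar>g x\<bar> * f x \<partial>L)" if "f \<in> borel_measurable borel" for f :: "_ \<Rightarrow> real"
    unfolding T_def using that by (subst integral_density) (simp_all add: measurable_cong_sets[OF sets_L refl])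
  have "emeasure T (space T) = (\<integral>\<^sup>+x. ennreal \<bar>g x\<bar> \<partial>L)"
    unfolding T_def by (subst emeasure_density) (auto simp: sets_eq_imp_space_eq[OF sets_L] sets_L)
  also have "\<dots> < \<infinity>" using \<open>integrable L g\<close> by (simp add: integrable_iff_bounded)
  finally have "finite_measure T" by (intro finite_measureI) simp
  moreover have "emeasure T (- A) = 0"
  proof -
    have "- A \<in> sets L" using A sets_L by simp
    moreover have "AE x in L. x \<in> - A \<longrightarrow> ennreal \<bar>g x\<bar> = 0"
      using finite_measure_on_AE[OF A L] by eventually_elim simp
    ultimately show ?thesis
      using null_sets_density_iff[of "\<lambda>x. ennreal \<bar>g x\<bar>" L "- A"] by (simp add: T_def null_sets_def)
  qed
  ultimately show T_h: "signed_measure_on A T h"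
    using sets_T g by (simp add: signed_measure_on_def h_def)
  show "(\<integral>x. f x * h x \<partial>T) = (\<integral>x. f x * g x \<partial>L)" if "f \<in> borel_measurable borel" for f
  proof -
    have "(\<integral>x. f x * h x \<partial>T) = (\<integral>x. \<bar>g x\<bar> * (f x * h x) \<partial>L)"
      using that by (intro integral_T) (simp add: h_def)
    also have "\<dots> = (\<integral>x. f x * g x \<partial>L)"
      by (rule Bochner_Integration.integral_cong) (auto simp: h_def abs_if)
    finally show ?thesis .
  qed
  have "measure T A = measure T (space T)"
    by (rule finite_measure_on_measure_eq_space[OF A signed_measure_on_imp_finite_measure_on[OF T_h]])
  also have "\<dots> = (\<integral>x. 1 \<partial>T)" by simp
  also have "\<dots> = (\<integral>x. \<bar>g x\<bar> \<partial>L)" using integral_T[of "\<lambda>_. 1"] by simp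
  finally show "measure T A = (\<integral>x. \<bar>g x\<bar> \<partial>L)" .
qed

lemma emeasure_density_convex_combination_eq_0:
  fixes L :: "'a measure" and a b :: "'a \<Rightarrow> real"
  assumes [measurable]: "a \<in> borel_measurable L" "b \<in> borel_measurable L"
    and U: "U \<in> sets L" and "s \<noteq> t"
    and "emeasure (density L (\<lambda>x. ennreal \<bar>(1 - s) * a x + s * b x\<bar>)) U = 0"
    and "emeasure (density L (\<lambda>x. ennreal \<bar>(1 - t) * a x + t * b x\<bar>)) U = 0"
  shows "emeasure (density L (\<lambda>x. ennreal \<bar>b x\<bar>)) U = 0"
proof -
  have null_iff: "emeasure (density L (\<lambda>x. ennreal \<bar>c x\<bar>)) U = 0 \<longleftrightarrow> (AE x in L. x \<in> U \<longrightarrow> c x = 0)"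
    if [measurable]: "c \<in> borel_measurable L" for c
    using null_sets_density_iff[of "\<lambda>x. ennreal \<bar>c x\<bar>" L U] U by (simp add: null_sets_def)
  have "AE x in L. x \<in> U \<longrightarrow> (1 - s) * a x + s * b x = 0"
    and "AE x in L. x \<in> U \<longrightarrow> (1 - t) * a x + t * b x = 0"
    using assms(5,6) null_iff[of "\<lambda>x. (1 - s) * a x + s * b x"] null_iff[of "\<lambda>x. (1 - t) * a x + t * b x"]
    by simp_all
  then have "AE x in L. x \<in> U \<longrightarrow> b x = 0"
  proof eventually_elim
    case (elim x)
    show ?case
    proof
      assume "x \<in> U"
      then have s0: "(1 - s) * a x + s * b x = 0" and t0: "(1 - t) * a x + t * b x = 0"
        using elim by auto
      have "(t - s) * (b x - a x) = ((1 - t) * a x + t * b x) - ((1 - s) * a x + s * b x)"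
        by (simp add: algebra_simps)
      then have "b x = a x" using s0 t0 \<open>s \<noteq> t\<close> by simp
      then show "b x = 0" using t0 by (simp add: algebra_simps)
    qed
  qed
  then show ?thesis by (simp add: null_iff)
qed

lemma msupport_density_generic_convex_combination:
  fixes L :: "(real^'d::finite) measure" and a b :: "real^'d \<Rightarrow> real"
  assumes sets_L: "sets L = sets borel"
    and a: "a \<in> borel_measurable borel" and b: "b \<in> borel_measurable borel"
  obtains t where "t \<in> {0<..<1}"
    and "msupport (density L (\<lambda>x. ennreal \<bar>b x\<bar>))
      \<subseteq> msupport (density L (\<lambda>x. ennreal \<bar>(1 - t) * a x + t * b x\<bar>))"
proof -
  \<comment> \<open>A basis set charged by |b| L is null for |(1 - t) a + t b| L for at most one t,
    so only countably many t are bad.\<close>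
  have meas_L: "measurable L borel = borel_measurable borel"
    using sets_L by (intro measurable_cong_sets) simp_all
  define M where "M t = density L (\<lambda>x. ennreal \<bar>(1 - t) * a x + t * b x\<bar>)" for t
  have sets_M: "sets (M t) = sets borel" for t by (simp add: M_def sets_L)
  obtain B :: "(real^'d) set set" where "countable B" and B: "topological_basis B"
    using ex_countable_basis by blast
  define bad where "bad = (\<Union>U\<in>{U\<in>B. 0 < emeasure (M 1) U}. {t. emeasure (M t) U = 0})"
  have "countable bad"
    unfolding bad_def
  proof (intro countable_UN)
    show "countable {U\<in>B. 0 < emeasure (M 1) U}" using \<open>countable B\<close> by simp
    fix U assume "U \<in> {U\<in>B. 0 < emeasure (M 1) U}"
    then have U: "U \<in> sets L" "0 < emeasure (M 1) U" using topological_basis_open[OF B] sets_L by auto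
    have "s = t" if "emeasure (M s) U = 0" "emeasure (M t) U = 0" for s t
      using emeasure_density_convex_combination_eq_0[of a L b U s t] a b U that
      by (force simp: M_def meas_L)
    then have "{t. emeasure (M t) U = 0} \<subseteq> {SOME t. emeasure (M t) U = 0}"
      using someI[of "\<lambda>t. emeasure (M t) U = 0"] by blast
    then show "countable {t. emeasure (M t) U = 0}" by (rule countable_subset) simp
  qed
  then have "\<not> {0<..<1::real} \<subseteq> bad"
    using uncountable_open_interval[of 0 "1::real"] countable_subset by auto
  then obtain t where t: "t \<in> {0<..<1}" and "t \<notin> bad" by blast
  have "msupport (M 1) \<subseteq> msupport (M t)"
  proof
    fix x assume "x \<in> msupport (M 1)"
    then have "0 < emeasure (M t) U" if "U \<in> B" "x \<in> U" for U
      using that \<open>t \<notin> bad\<close> msupport_iff_basis[OF B sets_M] by (auto simp: bad_def zero_less_iff_neq_zero)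
    then show "x \<in> msupport (M t)" using msupport_iff_basis[OF B sets_M] by blast
  qed
  then show ?thesis using that[OF t] by (simp add: M_def)
qed

definition reproducing_density ::
  "nat \<Rightarrow> real^'d::finite \<Rightarrow> (real^'d) measure \<Rightarrow> (real^'d \<Rightarrow> real) \<Rightarrow> bool" where
  "reproducing_density n z0 L w \<longleftrightarrow> w \<in> borel_measurable borel \<and>
     (\<forall>p\<in>polys n. integrable L (\<lambda>x. p x * w x) \<and> (\<integral>x. p x * w x \<partial>L) = p z0)"

lemma reproducing_density_mult:
  fixes L :: "(real^'d::finite) measure" and D f :: "real^'d \<Rightarrow> real"
  assumes sets_L: "sets L = sets borel"
    and D: "D \<in> borel_measurable borel" and D_nn: "\<And>x. 0 \<le> D x" and f: "f \<in> borel_measurable borel"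
    and int: "\<And>p. p \<in> polys n \<Longrightarrow> integrable (density L (\<lambda>x. ennreal (D x))) (\<lambda>x. p x * f x)"
    and rep: "\<And>p. p \<in> polys n \<Longrightarrow> (\<integral>x. p x * f x \<partial>density L (\<lambda>x. ennreal (D x))) = p z0"
  shows "reproducing_density n z0 L (\<lambda>x. D x * f x)"
  unfolding reproducing_density_def
proof (intro conjI ballI)
  note [measurable] = D f
  have meas_L: "measurable L borel = borel_measurable borel"
    using sets_L by (intro measurable_cong_sets) simp_all
  show "(\<lambda>x. D x * f x) \<in> borel_measurable borel" by measurable
  fix p :: "real^'d \<Rightarrow> real" assume p: "p \<in> polys n"
  note [measurable] = borel_measurable_polys[OF p]
  have eq: "(\<lambda>x. p x * (D x * f x)) = (\<lambda>x. D x * (p x * f x))" by (simp add: fun_eq_iff)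
  note dens = integral_density_real[of D L, unfolded meas_L, OF D D_nn, of "\<lambda>x. p x * f x"]
  show "integrable L (\<lambda>x. p x * (D x * f x))" unfolding eq using int[OF p] dens by simp
  show "(\<integral>x. p x * (D x * f x) \<partial>L) = p z0" unfolding eq using rep[OF p] dens by simp
qed

lemma density_convex_combination_reproduces:
  fixes L :: "(real^'d::finite) measure" and w0 w1 :: "real^'d \<Rightarrow> real" and t :: real
  defines "w \<equiv> \<lambda>x. (1 - t) * w0 x + t * w1 x"
  assumes A: "closed A" and L: "finite_measure_on A L" and t: "0 \<le> t" "t \<le> 1"
    and w0: "reproducing_density n z0 L w0" and w1: "reproducing_density n z0 L w1"
  shows "signed_measure_on A (density L (\<lambda>x. ennreal \<bar>w x\<bar>)) (\<lambda>x. if 0 \<le> w x then 1 else - 1)"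
    and "reproduces n z0 (density L (\<lambda>x. ennreal \<bar>w x\<bar>)) (\<lambda>x. if 0 \<le> w x then 1 else - 1)"
    and "measure (density L (\<lambda>x. ennreal \<bar>w x\<bar>)) A
      \<le> (1 - t) * (\<integral>x. \<bar>w0 x\<bar> \<partial>L) + t * (\<integral>x. \<bar>w1 x\<bar> \<partial>L)"
proof -
  note [measurable] = w0[unfolded reproducing_density_def, THEN conjunct1]
    w1[unfolded reproducing_density_def, THEN conjunct1]
  have int0: "integrable L w0" and int1: "integrable L w1"
    using w0 w1 polys_const[of 1 n] by (auto simp: reproducing_density_def)
  have w_meas: "w \<in> borel_measurable borel" unfolding w_def by measurable
  have w_int: "integrable L w" using int0 int1 by (simp add: w_def)
  note density = signed_measure_on_density[OF A L w_meas w_int]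
  show "signed_measure_on A (density L (\<lambda>x. ennreal \<bar>w x\<bar>)) (\<lambda>x. if 0 \<le> w x then 1 else - 1)"
    by (rule density(1))
  show "reproduces n z0 (density L (\<lambda>x. ennreal \<bar>w x\<bar>)) (\<lambda>x. if 0 \<le> w x then 1 else - 1)"
    unfolding reproduces_def
  proof
    fix p :: "real^'d \<Rightarrow> real" assume p: "p \<in> polys n"
    have "(\<integral>x. p x * (if 0 \<le> w x then 1 else - 1) \<partial>density L (\<lambda>x. ennreal \<bar>w x\<bar>)) = (\<integral>x. p x * w x \<partial>L)"
      by (rule density(2)[OF borel_measurable_polys[OF p]])
    also have "\<dots> = (\<integral>x. (1 - t) * (p x * w0 x) + t * (p x * w1 x) \<partial>L)"
      by (simp add: w_def algebra_simps)
    also have "\<dots> = (1 - t) * p z0 + t * p z0"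
      using w0 w1 p by (simp add: reproducing_density_def)
    finally show "(\<integral>x. p x * (if 0 \<le> w x then 1 else - 1) \<partial>density L (\<lambda>x. ennreal \<bar>w x\<bar>)) = p z0"
      by (simp add: algebra_simps)
  qed
  have "measure (density L (\<lambda>x. ennreal \<bar>w x\<bar>)) A = (\<integral>x. \<bar>w x\<bar> \<partial>L)" by (rule density(3))
  also have "\<dots> \<le> (\<integral>x. (1 - t) * \<bar>w0 x\<bar> + t * \<bar>w1 x\<bar> \<partial>L)"
    using int0 int1 t
    by (intro integral_mono) (auto simp: w_def intro: order_trans[OF abs_triangle_ineq] simp: abs_mult)
  also have "\<dots> = (1 - t) * (\<integral>x. \<bar>w0 x\<bar> \<partial>L) + t * (\<integral>x. \<bar>w1 x\<bar> \<partial>L)"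
    using int0 int1 by simp
  finally show "measure (density L (\<lambda>x. ennreal \<bar>w x\<bar>)) A
      \<le> (1 - t) * (\<integral>x. \<bar>w0 x\<bar> \<partial>L) + t * (\<integral>x. \<bar>w1 x\<bar> \<partial>L)" .
qed

lemma reproducing_density_of_kernel:
  fixes L \<mu> :: "(real^'d::finite) measure" and D k :: "real^'d \<Rightarrow> real"
  assumes A: "compact A" and sets_L: "sets L = sets borel"
    and D: "D \<in> borel_measurable borel" and D_nn: "\<And>x. 0 \<le> D x"
    and \<mu>_eq: "\<mu> = density L (\<lambda>x. ennreal (D x))" and \<mu>: "finite_measure_on A \<mu>"
    and k: "k \<in> polys n" and k_rep: "\<forall>p\<in>polys n. (\<integral>x. p x * k x \<partial>\<mu>) = p z0"
  shows "reproducing_density n z0 L (\<lambda>x. D x * k x)"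
    and "(\<integral>x. \<bar>D x * k x\<bar> \<partial>L) = (\<integral>x. \<bar>k x\<bar> \<partial>\<mu>)"
proof -
  note [measurable] = D borel_measurable_polys[OF k]
  show "reproducing_density n z0 L (\<lambda>x. D x * k x)"
    using k_rep
    by (intro reproducing_density_mult[OF sets_L D D_nn])
      (auto simp flip: \<mu>_eq intro!: integrable_continuous[OF A \<mu>] continuous_intros
        continuous_on_polys[OF k] dest: continuous_on_polys)
  have meas_L: "measurable L borel = borel_measurable borel"
    using sets_L by (intro measurable_cong_sets) simp_all
  show "(\<integral>x. \<bar>D x * k x\<bar> \<partial>L) = (\<integral>x. \<bar>k x\<bar> \<partial>\<mu>)"
    using integral_density_real(1)[of D L "\<lambda>x. \<bar>k x\<bar>", unfolded meas_L] D_nn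
    by (simp add: \<mu>_eq abs_mult)
qed

lemma reproducing_density_of_signed_measure:
  fixes L T :: "(real^'d::finite) measure" and D h :: "real^'d \<Rightarrow> real"
  assumes A: "compact A" and sets_L: "sets L = sets borel"
    and D: "D \<in> borel_measurable borel" and D_nn: "\<And>x. 0 \<le> D x"
    and T_eq: "T = density L (\<lambda>x. ennreal (D x))"
    and T_h: "signed_measure_on A T h" and rep: "reproduces n z0 T h"
  shows "reproducing_density n z0 L (\<lambda>x. D x * h x)"
    and "density L (\<lambda>x. ennreal \<bar>D x * h x\<bar>) = T"
    and "(\<integral>x. \<bar>D x * h x\<bar> \<partial>L) = measure T A"
proof -
  have T: "finite_measure_on A T" using T_h by (rule signed_measure_on_imp_finite_measure_on)
  have h[measurable]: "h \<in> borel_measurable borel" and h1: "\<And>x. \<bar>h x\<bar> = 1"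
    using T_h by (auto simp: signed_measure_on_def)
  note [measurable] = D
  show "reproducing_density n z0 L (\<lambda>x. D x * h x)"
    using rep h1
    by (intro reproducing_density_mult[OF sets_L D D_nn h])
      (auto simp: reproduces_def simp flip: T_eq
        intro!: integrable_continuous_mult_bounded[OF A T _ h] continuous_on_polys)
  show "density L (\<lambda>x. ennreal \<bar>D x * h x\<bar>) = T"
    unfolding T_eq by (simp add: abs_mult h1 D_nn)
  have meas_L: "measurable L borel = borel_measurable borel"
    using sets_L by (intro measurable_cong_sets) simp_all
  show "(\<integral>x. \<bar>D x * h x\<bar> \<partial>L) = measure T A"
    using integral_density_real(1)[of D L "\<lambda>_. 1", unfolded meas_L] D_nn
      finite_measure_on_measure_eq_space[OF compact_imp_closed[OF A] T]
    by (simp add: T_eq abs_mult h1)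
qed

lemma exists_reproducing_competitor:
  fixes A :: "(real^'d::finite) set" and T \<mu> :: "(real^'d) measure" and h k :: "real^'d \<Rightarrow> real"
  assumes A: "compact A" and T_h: "signed_measure_on A T h" and rep: "reproduces n z0 T h"
    and \<mu>: "prob_measure_on A \<mu>" and k: "k \<in> polys n"
    and k_rep: "\<forall>p\<in>polys n. (\<integral>x. p x * k x \<partial>\<mu>) = p z0"
  obtains T' h' t where "signed_measure_on A T' h'" and "reproduces n z0 T' h'"
    and "msupport T \<subseteq> msupport T'" and "t \<in> {0<..<1}"
    and "measure T' A \<le> (1 - t) * (\<integral>x. \<bar>k x\<bar> \<partial>\<mu>) + t * measure T A"
proof -
  \<comment> \<open>k \<mu> itself may miss part of the support of T; mixing in T repairs this for generic t.\<close>
  have closed: "closed A" using A by (rule compact_imp_closed)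
  have \<mu>_on: "finite_measure_on A \<mu>" using \<mu> by (rule prob_measure_on_imp_finite_measure_on)
  obtain L D0 D1 where L: "finite_measure_on A L"
    and D0: "D0 \<in> borel_measurable borel" "\<And>x. 0 \<le> D0 x" "\<mu> = density L (\<lambda>x. ennreal (D0 x))"
    and D1: "D1 \<in> borel_measurable borel" "\<And>x. 0 \<le> D1 x" "T = density L (\<lambda>x. ennreal (D1 x))"
    using finite_measures_common_density[OF closed \<mu>_on signed_measure_on_imp_finite_measure_on[OF T_h]]
    by blast
  have sets_L: "sets L = sets borel" using L by (simp add: finite_measure_on_def)
  note w0 = reproducing_density_of_kernel[OF A sets_L D0 \<mu>_on k k_rep]
  note w1 = reproducing_density_of_signed_measure[OF A sets_L D1 T_h rep]
  have "(\<lambda>x. D0 x * k x) \<in> borel_measurable borel" and "(\<lambda>x. D1 x * h x) \<in> borel_measurable borel"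
    using w0(1) w1(1) by (simp_all add: reproducing_density_def)
  then obtain t where t: "t \<in> {0<..<1}" and supp: "msupport (density L (\<lambda>x. ennreal \<bar>D1 x * h x\<bar>))
      \<subseteq> msupport (density L (\<lambda>x. ennreal \<bar>(1 - t) * (D0 x * k x) + t * (D1 x * h x)\<bar>))"
    by (rule msupport_density_generic_convex_combination[OF sets_L])
  have "0 \<le> t" and "t \<le> 1" using t by simp_all
  note competitor = density_convex_combination_reproduces[OF closed L this w0(1) w1(1)]
  show ?thesis
    using that[OF competitor(1,2) supp[unfolded w1(2)] t] competitor(3) w0(2) w1(3) by simp
qed

lemma Kn_lower_bound:
  fixes A :: "(real^'d::finite) set" and T \<mu> :: "(real^'d) measure"
  assumes A: "compact A" and S: "in_S A n z0 T h" and rep: "reproduces n z0 T h"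
    and min: "\<forall>T' h'. in_S A n z0 T' h' \<and> reproduces n z0 T' h' \<longrightarrow> measure T A \<le> measure T' A"
    and \<mu>: "prob_measure_on A \<mu>" and nondeg: "non_degenerate n \<mu>"
  shows "(measure T A)\<^sup>2 \<le> Kn n \<mu> z0"
proof -
  have T_h: "signed_measure_on A T h" using S by (simp add: in_S_def)
  interpret nondegenerate_measure A \<mu> n
    using A \<mu> nondeg by unfold_locales (simp_all add: prob_measure_on_imp_finite_measure_on)
  interpret \<mu>: prob_space \<mu> using \<mu> by (simp add: prob_measure_on_def)
  obtain k where k: "k \<in> polys n" and k_rep: "\<forall>p\<in>polys n. (\<integral>x. p x * k x \<partial>\<mu>) = p z0"
    and K: "Kn n \<mu> z0 = k z0"
    using Kn_reproducing_kernel by blast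
  define l where "l = (\<integral>x. \<bar>k x\<bar> \<partial>\<mu>)"
  obtain T' h' t where T'_h': "signed_measure_on A T' h'" and rep': "reproduces n z0 T' h'"
    and supp: "msupport T \<subseteq> msupport T'" and t: "t \<in> {0<..<1}"
    and mass: "measure T' A \<le> (1 - t) * l + t * measure T A"
    unfolding l_def using exists_reproducing_competitor[OF A T_h rep \<mu> k k_rep] by blast
  have "in_S A n z0 T' h'" using S T'_h' supp by (auto simp: in_S_def)
  then have "measure T A \<le> measure T' A" using min rep' by blast
  then have "(1 - t) * measure T A \<le> (1 - t) * l"
    using mass unfolding left_diff_distrib by linarith
  then have "measure T A \<le> l" using t by (simp add: mult_le_cancel_left_pos)
  moreover have "0 \<le> measure T A" by simp
  ultimately have "(measure T A)\<^sup>2 \<le> l\<^sup>2" by (rule power_mono)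
  also have "\<dots> \<le> measure \<mu> (space \<mu>) * (\<integral>x. \<bar>k x\<bar>\<^sup>2 \<partial>\<mu>)"
    unfolding l_def using integrable_polys_mult[OF k k]
      integrable_continuous[OF A finite_on_A continuous_on_polys[OF k]]
    by (intro \<mu>.square_integral_le) (simp_all add: power2_eq_square)
  also have "\<dots> = (\<integral>x. k x * k x \<partial>\<mu>)" by (simp add: \<mu>.prob_space power2_eq_square)
  also have "\<dots> = Kn n \<mu> z0" using K bspec[OF k_rep k] by simp
  finally show ?thesis .
qed

theorem mainTheorem3:
  fixes A :: "(real^'d::finite) set" and n :: nat and z0 :: "real^'d"
    and T :: "(real^'d) measure" and h :: "real^'d \<Rightarrow> real"
  assumes "compact A" and "z0 \<notin> A"
    and "in_S A n z0 T h" and "reproduces n z0 T h"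
    and "\<forall>T' h'. in_S A n z0 T' h' \<and> reproduces n z0 T' h' \<longrightarrow> measure T A \<le> measure T' A"
  shows "optimal_prediction_measure A n z0 (scale_measure (ennreal (1 / measure T A)) T)"
proof -
  note A = assms(1) and rep = assms(4) and min = assms(5)
  define \<mu> where "\<mu> = scale_measure (ennreal (1 / measure T A)) T"
  obtain \<mu>' where opt: "optimal_prediction_measure A n z0 \<mu>'" and supp: "msupport \<mu>' \<subseteq> msupport T"
    and T_h: "signed_measure_on A T h"
    using assms(3) by (auto simp: in_S_def)
  have T: "finite_measure_on A T" using T_h by (rule signed_measure_on_imp_finite_measure_on)
  have "0 < measure T A" by (rule reproduces_measure_pos[OF A T_h rep])
  then have \<mu>_prob: "prob_measure_on A \<mu>"
    unfolding \<mu>_def by (rule prob_measure_on_normalize[OF compact_imp_closed[OF A] T])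
  have "msupport \<mu> = msupport T" unfolding \<mu>_def using \<open>0 < measure T A\<close> by (simp add: msupport_scale_measure)
  moreover have "non_degenerate n \<mu>'" and "sets \<mu>' = sets borel"
    using opt by (auto simp: optimal_prediction_measure_def prob_measure_on_def)
  ultimately have \<mu>_nondeg: "non_degenerate n \<mu>"
    using non_degenerate_msupport_mono[OF _ _ A prob_measure_on_imp_finite_measure_on[OF \<mu>_prob]] supp
    by blast
  have "Kn n \<mu> z0 \<le> Kn n \<mu>'' z0" if "prob_measure_on A \<mu>''" and "non_degenerate n \<mu>''" for \<mu>''
    using Kn_normalized_le[OF A T_h rep \<mu>_nondeg[unfolded \<mu>_def]]
      Kn_lower_bound[OF A assms(3) rep min that] unfolding \<mu>_def by linarith
  then show ?thesis
    using \<mu>_prob \<mu>_nondeg unfolding \<mu>_def optimal_prediction_measure_def by blast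
qed

end
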